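(* Let $\mathcal T$ be an orbital category. The monotone map $\upsilon:\mathrm{wIndSys}_{\mathcal T}\to\mathrm{Fam}_{\mathcal T}$ has a fully faithful left adjoint given by $\mathcal F\mapsto E^{\mathcal T}_{\mathcal F}\underline{\mathbb F}^0_{\mathcal F}$, the $\mathcal T$-weak indexing system whose $V$-value is $\{\emptyset_V,*_V\}$ (up to isomorphism) for $V\in\mathcal F$ and $\emptyset$ otherwise.
   Context: For a small category $\mathcal T$, $\mathbb F_{\mathcal T}$ is the full subcategory of $\mathrm{Fun}(\mathcal T^{op},\mathrm{Set})$ on finite coproducts of representables; $\mathcal T$ is orbital if $\mathbb F_{\mathcal T}$ has pullbacks. $\mathbb F_V:=\mathbb F_{\mathcal T,/V}$, $*_V$ terminal, $\emptyset_V$ initial; for $U\to V$, $\mathrm{Res}^V_U$ is pullback and $\mathrm{Ind}^V_U$ postcomposition. A full $\mathcal T$-subcategory assigns isomorphism-closed classes $\mathcal C_V\subseteq\mathrm{Ob}\,\mathbb F_V$ stable under restriction. For $S\in\mathbb F_V$ with orbits $U$ and $T_U\in\mathbb F_U$, $\coprod_U^ST_U:=\coprod_U\mathrm{Ind}_U^VT_U$. A $\mathcal T$-weak indexing system is a full $\mathcal T$-subcategory with $\mathcal C_V\neq\emptyset\Rightarrow *_V\in\mathcal C_V$ and closed under $\coprod^S_UT_U$ for $S\in\mathcal C_V$, $T_U\in\mathcal C_U$; $\mathrm{wIndSys}_{\mathcal T}$ is their poset under inclusion. A $\mathcal T$-family is a full subcategory $\mathcal F$ with $V\to W$, $W\in\mathcal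 F\Rightarrow V\in\mathcal F$; $\mathrm{Fam}_{\mathcal T}$ their poset. $\upsilon(\mathcal C)=\{V\mid\emptyset_V\in\mathcal C_V\}$. A monotone map $L$ is left adjoint to $\pi$ if $L(x)\le y\iff x\le\pi(y)$; fully faithful means order-reflecting. *)

theory Defs
  imports Main
begin

text \<open>A small category T: object set, hom-sets, identities, composition
  (cComp T g f is "g after f").\<close>
record ('o,'m) cat =
  cOb :: "'o set"
  cHom :: "'o \<Rightarrow> 'o \<Rightarrow> 'm set"
  cId :: "'o \<Rightarrow> 'm"
  cComp :: "'m \<Rightarrow> 'm \<Rightarrow> 'm"

definition is_category :: "('o,'m) cat \<Rightarrow> bool" where
  "is_category T \<equiv>
     (\<forall>a b f. f \<in> cHom T a b \<longrightarrow> a \<in> cOb T \<and> b \<in> cOb T) \<and>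
     (\<forall>a\<in>cOb T. cId T a \<in> cHom T a a) \<and>
     (\<forall>a b c f g. f \<in> cHom T a b \<longrightarrow> g \<in> cHom T b c \<longrightarrow> cComp T g f \<in> cHom T a c) \<and>
     (\<forall>a b c d f g h. f \<in> cHom T a b \<longrightarrow> g \<in> cHom T b c \<longrightarrow> h \<in> cHom T c d \<longrightarrow>
        cComp T h (cComp T g f) = cComp T (cComp T h g) f) \<and>
     (\<forall>a b f. f \<in> cHom T a b \<longrightarrow> cComp T (cId T b) f = f \<and> cComp T f (cId T a) = f)"

text \<open>The category F_T of finite coproducts of representables, modelled (via Yoneda)
  as the free finite-coproduct completion of T: an object is a finite list of objects
  of T (the orbits), a morphism A \<rightarrow> B is an index map phi together with T-morphisms
  A!i \<rightarrow> B!(phi i).\<close>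
definition ft_obj :: "('o,'m) cat \<Rightarrow> 'o list \<Rightarrow> bool" where
  "ft_obj T A \<equiv> set A \<subseteq> cOb T"

definition ft_hom :: "('o,'m) cat \<Rightarrow> 'o list \<Rightarrow> 'o list \<Rightarrow> (nat \<Rightarrow> nat) \<times> (nat \<Rightarrow> 'm) \<Rightarrow> bool" where
  "ft_hom T A B h \<equiv> \<forall>i<length A. fst h i < length B \<and> snd h i \<in> cHom T (A!i) (B!(fst h i))"

definition ft_eq :: "'o list \<Rightarrow> (nat \<Rightarrow> nat) \<times> (nat \<Rightarrow> 'm) \<Rightarrow> (nat \<Rightarrow> nat) \<times> (nat \<Rightarrow> 'm) \<Rightarrow> bool" where
  "ft_eq A h k \<equiv> \<forall>i<length A. fst h i = fst k i \<and> snd h i = snd k i"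

definition ft_comp :: "('o,'m) cat \<Rightarrow> (nat \<Rightarrow> nat) \<times> (nat \<Rightarrow> 'm) \<Rightarrow> (nat \<Rightarrow> nat) \<times> (nat \<Rightarrow> 'm)
    \<Rightarrow> (nat \<Rightarrow> nat) \<times> (nat \<Rightarrow> 'm)" where
  "ft_comp T k h = (fst k \<circ> fst h, \<lambda>i. cComp T (snd k (fst h i)) (snd h i))"

definition ft_id :: "('o,'m) cat \<Rightarrow> 'o list \<Rightarrow> (nat \<Rightarrow> nat) \<times> (nat \<Rightarrow> 'm)" where
  "ft_id T A = (\<lambda>i. i, \<lambda>i. cId T (A!i))"

definition is_pullback :: "('o,'m) cat \<Rightarrow> 'o list \<Rightarrow> 'o list \<Rightarrow> 'o list
    \<Rightarrow> (nat \<Rightarrow> nat) \<times> (nat \<Rightarrow> 'm) \<Rightarrow> (nat \<Rightarrow> nat) \<times> (nat \<Rightarrow> 'm)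
    \<Rightarrow> 'o list \<Rightarrow> (nat \<Rightarrow> nat) \<times> (nat \<Rightarrow> 'm) \<Rightarrow> (nat \<Rightarrow> nat) \<times> (nat \<Rightarrow> 'm) \<Rightarrow> bool" where
  "is_pullback T A B C f g P p q \<equiv>
     ft_obj T P \<and> ft_hom T P A p \<and> ft_hom T P B q \<and>
     ft_eq P (ft_comp T f p) (ft_comp T g q) \<and>
     (\<forall>Q a b. ft_obj T Q \<and> ft_hom T Q A a \<and> ft_hom T Q B b \<and>
        ft_eq Q (ft_comp T f a) (ft_comp T g b) \<longrightarrow>
        (\<exists>h. ft_hom T Q P h \<and> ft_eq Q (ft_comp T p h) a \<and> ft_eq Q (ft_comp T q h) b \<and>
           (\<forall>h'. ft_hom T Q P h' \<and> ft_eq Q (ft_comp T p h') a \<and> ft_eq Q (ft_comp T q h') b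
                 \<longrightarrow> ft_eq Q h h')))"

definition orbital :: "('o,'m) cat \<Rightarrow> bool" where
  "orbital T \<equiv> is_category T \<and>
     (\<forall>A B C f g. ft_obj T A \<and> ft_obj T B \<and> ft_obj T C \<and> ft_hom T A C f \<and> ft_hom T B C g
        \<longrightarrow> (\<exists>P p q. is_pullback T A B C f g P p q))"

text \<open>The slice F_V = F_{T,/V}: an object is a list of orbits U_i with structure maps
  U_i \<rightarrow> V.\<close>
definition sl_obj :: "('o,'m) cat \<Rightarrow> 'o \<Rightarrow> ('o \<times> 'm) list \<Rightarrow> bool" where
  "sl_obj T V S \<equiv> \<forall>x\<in>set S. fst x \<in> cOb T \<and> snd x \<in> cHom T (fst x) V"

text \<open>structure map of S, as an F_T-morphism  map fst S \<rightarrow> [V]\<close>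
definition sl_str :: "('o \<times> 'm) list \<Rightarrow> (nat \<Rightarrow> nat) \<times> (nat \<Rightarrow> 'm)" where
  "sl_str S = (\<lambda>_. 0, \<lambda>i. snd (S!i))"

definition sl_hom :: "('o,'m) cat \<Rightarrow> ('o \<times> 'm) list \<Rightarrow> ('o \<times> 'm) list
    \<Rightarrow> (nat \<Rightarrow> nat) \<times> (nat \<Rightarrow> 'm) \<Rightarrow> bool" where
  "sl_hom T S S' h \<equiv> ft_hom T (map fst S) (map fst S') h \<and>
     (\<forall>i<length S. cComp T (snd (S'!(fst h i))) (snd h i) = snd (S!i))"

definition sl_iso :: "('o,'m) cat \<Rightarrow> 'o \<Rightarrow> ('o \<times> 'm) list \<Rightarrow> ('o \<times> 'm) list \<Rightarrow> bool" where
  "sl_iso T V S S' \<equiv> sl_obj T V S \<and> sl_obj T V S' \<and>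
     (\<exists>h k. sl_hom T S S' h \<and> sl_hom T S' S k \<and>
        ft_eq (map fst S) (ft_comp T k h) (ft_id T (map fst S)) \<and>
        ft_eq (map fst S') (ft_comp T h k) (ft_id T (map fst S')))"

text \<open>R is (a choice of) Res^V_U S along u : U \<rightarrow> V, i.e. a pullback of S \<rightarrow> V along U \<rightarrow> V.\<close>
definition is_res :: "('o,'m) cat \<Rightarrow> 'm \<Rightarrow> 'o \<Rightarrow> 'o \<Rightarrow> ('o \<times> 'm) list \<Rightarrow> ('o \<times> 'm) list \<Rightarrow> bool" where
  "is_res T u U V S R \<equiv> u \<in> cHom T U V \<and> sl_obj T V S \<and> sl_obj T U R \<and>
     (\<exists>q. is_pullback T (map fst S) [U] [V] (sl_str S) (\<lambda>_. 0, \<lambda>_. u) (map fst R) q (sl_str R))"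

definition full_sub :: "('o,'m) cat \<Rightarrow> ('o \<Rightarrow> ('o \<times> 'm) list set) \<Rightarrow> bool" where
  "full_sub T C \<equiv>
     (\<forall>V. V \<notin> cOb T \<longrightarrow> C V = {}) \<and>
     (\<forall>V\<in>cOb T. \<forall>S\<in>C V. sl_obj T V S) \<and>
     (\<forall>V\<in>cOb T. \<forall>S S'. S \<in> C V \<and> sl_iso T V S S' \<longrightarrow> S' \<in> C V) \<and>
     (\<forall>U V u S R. is_res T u U V S R \<and> S \<in> C V \<longrightarrow> R \<in> C U)"

text \<open>coprod^S_U T_U = coprod_U Ind^V_U T_U, where Ts i lies over the i-th orbit of S.\<close>
definition indcoprod :: "('o,'m) cat \<Rightarrow> ('o \<times> 'm) list \<Rightarrow> (nat \<Rightarrow> ('o \<times> 'm) list) \<Rightarrow> ('o \<times> 'm) list" where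
  "indcoprod T S Ts = concat (map (\<lambda>i. map (\<lambda>x. (fst x, cComp T (snd (S!i)) (snd x))) (Ts i)) [0..<length S])"

definition wIndSys :: "('o,'m) cat \<Rightarrow> ('o \<Rightarrow> ('o \<times> 'm) list set) \<Rightarrow> bool" where
  "wIndSys T C \<equiv> full_sub T C \<and>
     (\<forall>V\<in>cOb T. C V \<noteq> {} \<longrightarrow> [(V, cId T V)] \<in> C V) \<and>
     (\<forall>V\<in>cOb T. \<forall>S Ts. S \<in> C V \<and> (\<forall>i<length S. Ts i \<in> C (fst (S!i))) \<longrightarrow> indcoprod T S Ts \<in> C V)"

definition family :: "('o,'m) cat \<Rightarrow> 'o set \<Rightarrow> bool" where
  "family T F \<equiv> F \<subseteq> cOb T \<and> (\<forall>V W f. f \<in> cHom T V W \<and> W \<in> F \<longrightarrow> V \<in> F)"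

definition upsilon :: "('o,'m) cat \<Rightarrow> ('o \<Rightarrow> ('o \<times> 'm) list set) \<Rightarrow> 'o set" where
  "upsilon T C = {V \<in> cOb T. [] \<in> C V}"

definition EF :: "('o,'m) cat \<Rightarrow> 'o set \<Rightarrow> 'o \<Rightarrow> ('o \<times> 'm) list set" where
  "EF T F = (\<lambda>V. if V \<in> F then {S. sl_iso T V S [] \<or> sl_iso T V S [(V, cId T V)]} else {})"

end

theory Submission
  imports Defs
begin

(*
  Up to isomorphism, (E_F)_V consists of the empty set and of single orbits W --iso--> V.
  upsilon C is downward closed because the empty set over W restricts to the empty set over V.
  E_F is a weak indexing system: composites of isomorphisms are isomorphisms, so induced coproducts
  of such objects keep this form, and restricting W --iso--> V along U --> V is a pullback of an
  isomorphism, hence again a single orbit isomorphic to U.  A weak indexing system containing the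
  empty set over V is nonempty at V, so it contains *_V and, being closed under isomorphism, all of
  (E_F)_V; this is the adjunction.  Since upsilon (E_F) = F, the unit is an identity and the left
  adjoint is fully faithful.
*)

lemma is_categoryD:
  assumes "is_category T"
  shows cat_hom_dom: "\<And>a b f. f \<in> cHom T a b \<Longrightarrow> a \<in> cOb T \<and> b \<in> cOb T"
    and cat_id_hom: "\<And>a. a \<in> cOb T \<Longrightarrow> cId T a \<in> cHom T a a"
    and cat_comp_hom: "\<And>a b c f g. f \<in> cHom T a b \<Longrightarrow> g \<in> cHom T b c \<Longrightarrow> cComp T g f \<in> cHom T a c"
    and cat_assoc: "\<And>a b c d f g h. f \<in> cHom T a b \<Longrightarrow> g \<in> cHom T b c \<Longrightarrow> h \<in> cHom T c d \<Longrightarrow>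
          cComp T h (cComp T g f) = cComp T (cComp T h g) f"
    and cat_id_left: "\<And>a b f. f \<in> cHom T a b \<Longrightarrow> cComp T (cId T b) f = f"
    and cat_id_right: "\<And>a b f. f \<in> cHom T a b \<Longrightarrow> cComp T f (cId T a) = f"
  using assms unfolding is_category_def by blast+

definition cat_iso :: "('o,'m) cat \<Rightarrow> 'o \<Rightarrow> 'o \<Rightarrow> 'm \<Rightarrow> bool" where
  "cat_iso T U V u \<longleftrightarrow> u \<in> cHom T U V \<and>
     (\<exists>u'. u' \<in> cHom T V U \<and> cComp T u u' = cId T V \<and> cComp T u' u = cId T U)"

lemma cat_iso_id:
  assumes "is_category T" "V \<in> cOb T"
  shows "cat_iso T V V (cId T V)"
  using assms cat_id_hom cat_id_left unfolding cat_iso_def by metis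

lemma cat_iso_comp:
  assumes c: "is_category T" and "cat_iso T X W x" "cat_iso T W V w"
  shows "cat_iso T X V (cComp T w x)"
proof -
  obtain x' where x: "x \<in> cHom T X W" "x' \<in> cHom T W X" "cComp T x x' = cId T W" "cComp T x' x = cId T X"
    using assms(2) unfolding cat_iso_def by blast
  obtain w' where w: "w \<in> cHom T W V" "w' \<in> cHom T V W" "cComp T w w' = cId T V" "cComp T w' w = cId T W"
    using assms(3) unfolding cat_iso_def by blast
  have "cComp T (cComp T w x) (cComp T x' w') = cComp T w (cComp T (cComp T x x') w')"
    using cat_assoc[OF c w(2) x(2) x(1)] cat_assoc[OF c cat_comp_hom[OF c w(2) x(2)] x(1) w(1)] by simp
  also have "\<dots> = cId T V" using x(3) cat_id_left[OF c w(2)] w(3) by simp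
  finally have right_inv: "cComp T (cComp T w x) (cComp T x' w') = cId T V" .
  have "cComp T (cComp T x' w') (cComp T w x) = cComp T x' (cComp T (cComp T w' w) x)"
    using cat_assoc[OF c x(1) w(1) w(2)] cat_assoc[OF c cat_comp_hom[OF c x(1) w(1)] w(2) x(2)] by simp
  also have "\<dots> = cId T X" using w(4) cat_id_left[OF c x(1)] x(4) by simp
  finally have left_inv: "cComp T (cComp T x' w') (cComp T w x) = cId T X" .
  show ?thesis
    unfolding cat_iso_def using right_inv left_inv cat_comp_hom[OF c x(1) w(1)] cat_comp_hom[OF c w(2) x(2)]
    by blast
qed

lemma ft_eq_sym: "ft_eq A h k \<Longrightarrow> ft_eq A k h"
  unfolding ft_eq_def by simp

lemma ft_eq_trans [trans]: "ft_eq A h k \<Longrightarrow> ft_eq A k l \<Longrightarrow> ft_eq A h l"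
  unfolding ft_eq_def by simp

lemma ft_hom_id: "is_category T \<Longrightarrow> ft_obj T A \<Longrightarrow> ft_hom T A A (ft_id T A)"
  unfolding ft_hom_def ft_id_def ft_obj_def by (auto intro!: cat_id_hom)

lemma ft_hom_comp:
  "is_category T \<Longrightarrow> ft_hom T A B f \<Longrightarrow> ft_hom T B C g \<Longrightarrow> ft_hom T A C (ft_comp T g f)"
  unfolding ft_hom_def ft_comp_def by (auto intro: cat_comp_hom)

lemma ft_comp_assoc:
  assumes "is_category T" "ft_hom T A B f" "ft_hom T B C g" "ft_hom T C D h"
  shows "ft_eq A (ft_comp T h (ft_comp T g f)) (ft_comp T (ft_comp T h g) f)"
  using assms unfolding ft_eq_def ft_comp_def ft_hom_def by (auto intro: cat_assoc)

lemma ft_comp_id_left: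
  "is_category T \<Longrightarrow> ft_hom T A B f \<Longrightarrow> ft_eq A (ft_comp T (ft_id T B) f) f"
  unfolding ft_eq_def ft_comp_def ft_id_def ft_hom_def by (auto intro: cat_id_left)

lemma ft_comp_id_right:
  "is_category T \<Longrightarrow> ft_hom T A B f \<Longrightarrow> ft_eq A (ft_comp T f (ft_id T A)) f"
  unfolding ft_eq_def ft_comp_def ft_id_def ft_hom_def by (auto intro: cat_id_right)

lemma ft_comp_cong_left:
  "ft_hom T A B f \<Longrightarrow> ft_eq B g g' \<Longrightarrow> ft_eq A (ft_comp T g f) (ft_comp T g' f)"
  unfolding ft_eq_def ft_comp_def ft_hom_def by simp

lemma ft_comp_cong_right: "ft_eq A f f' \<Longrightarrow> ft_eq A (ft_comp T g f) (ft_comp T g f')"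
  unfolding ft_eq_def ft_comp_def by simp

definition ft_iso :: "('o,'m) cat \<Rightarrow> 'o list \<Rightarrow> 'o list \<Rightarrow> (nat \<Rightarrow> nat) \<times> (nat \<Rightarrow> 'm) \<Rightarrow> bool" where
  "ft_iso T A B f \<longleftrightarrow> ft_hom T A B f \<and>
     (\<exists>g. ft_hom T B A g \<and> ft_eq A (ft_comp T g f) (ft_id T A) \<and> ft_eq B (ft_comp T f g) (ft_id T B))"

lemma ft_iso_to_orbit:
  assumes "ft_iso T A [U] f"
  shows "\<exists>X. A = [X] \<and> cat_iso T X U (snd f 0)"
proof -
  obtain g where f: "ft_hom T A [U] f" and g: "ft_hom T [U] A g"
    and gf: "ft_eq A (ft_comp T g f) (ft_id T A)" and fg: "ft_eq [U] (ft_comp T f g) (ft_id T [U])"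
    using assms unfolding ft_iso_def by blast
  have f_to_0: "fst f i = 0" if "i < length A" for i
    using f that unfolding ft_hom_def by auto
  have g0: "fst g 0 < length A" "snd g 0 \<in> cHom T U (A ! fst g 0)"
    using g unfolding ft_hom_def by auto
  have g_inj: "i = fst g 0" if "i < length A" for i
    using gf that f_to_0[OF that] unfolding ft_eq_def ft_comp_def ft_id_def by auto
  have "\<not> 1 < length A"
  proof
    assume two: "1 < length A"
    then have one: "0 < length A" by linarith
    show False using g_inj[OF one] g_inj[OF two] by simp
  qed
  with g0(1) obtain X where A: "A = [X]"
    by (cases A) auto
  moreover have "cat_iso T X U (snd f 0)"
    using A f g0 gf fg unfolding cat_iso_def ft_hom_def ft_eq_def ft_comp_def ft_id_def by auto
  ultimately show ?thesis by blast
qed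

lemma is_pullback_unique:
  assumes "is_pullback T A B C f g P p q" "ft_obj T Q" "ft_hom T Q A a" "ft_hom T Q B b"
    "ft_eq Q (ft_comp T f a) (ft_comp T g b)"
    "ft_hom T Q P h1" "ft_eq Q (ft_comp T p h1) a" "ft_eq Q (ft_comp T q h1) b"
    "ft_hom T Q P h2" "ft_eq Q (ft_comp T p h2) a" "ft_eq Q (ft_comp T q h2) b"
  shows "ft_eq Q h1 h2"
proof -
  obtain h where "\<forall>h'. ft_hom T Q P h' \<and> ft_eq Q (ft_comp T p h') a \<and> ft_eq Q (ft_comp T q h') b
                 \<longrightarrow> ft_eq Q h h'"
    using assms(1-5) unfolding is_pullback_def by blast
  then have "ft_eq Q h h1" "ft_eq Q h h2" using assms(6-11) by blast+
  then show ?thesis by (metis ft_eq_sym ft_eq_trans)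
qed

lemma is_pullback_lift:
  assumes "is_pullback T A B C f g P p q" "ft_obj T Q" "ft_hom T Q A a" "ft_hom T Q B b"
    "ft_eq Q (ft_comp T f a) (ft_comp T g b)"
  shows "\<exists>h. ft_hom T Q P h \<and> ft_eq Q (ft_comp T p h) a \<and> ft_eq Q (ft_comp T q h) b"
  using assms unfolding is_pullback_def by (metis (no_types, lifting))

lemma is_pullback_iso:
  assumes c: "is_category T" and pb: "is_pullback T A B C f g P p q"
    and f: "ft_iso T A C f" and B: "ft_obj T B" and g: "ft_hom T B C g"
  shows "ft_iso T P B q"
proof -
  (* The inverse of q is the lift k of the cone (f^-1 g, id_B); k q = id_P by uniqueness of lifts. *)
  obtain f' where fh: "ft_hom T A C f" and f': "ft_hom T C A f'"
    and f'f: "ft_eq A (ft_comp T f' f) (ft_id T A)" and ff': "ft_eq C (ft_comp T f f') (ft_id T C)"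
    using f unfolding ft_iso_def by blast
  have P: "ft_obj T P" and p: "ft_hom T P A p" and q: "ft_hom T P B q"
    and square: "ft_eq P (ft_comp T f p) (ft_comp T g q)"
    using pb unfolding is_pullback_def by blast+
  have "ft_eq B (ft_comp T f (ft_comp T f' g)) (ft_comp T (ft_comp T f f') g)"
    by (rule ft_comp_assoc[OF c g f' fh])
  also have "ft_eq B \<dots> (ft_comp T (ft_id T C) g)"
    by (rule ft_comp_cong_left[OF g ff'])
  also have "ft_eq B \<dots> (ft_comp T g (ft_id T B))"
    using ft_comp_id_left[OF c g] ft_comp_id_right[OF c g] by (metis ft_eq_sym ft_eq_trans)
  finally have cone: "ft_eq B (ft_comp T f (ft_comp T f' g)) (ft_comp T g (ft_id T B))" .
  obtain k where k: "ft_hom T B P k" and pk: "ft_eq B (ft_comp T p k) (ft_comp T f' g)"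
    and qk: "ft_eq B (ft_comp T q k) (ft_id T B)"
    using is_pullback_lift[OF pb B ft_hom_comp[OF c g f'] ft_hom_id[OF c B] cone] by blast
  have "ft_eq P (ft_comp T p (ft_comp T k q)) (ft_comp T (ft_comp T p k) q)"
    by (rule ft_comp_assoc[OF c q k p])
  also have "ft_eq P \<dots> (ft_comp T (ft_comp T f' g) q)"
    by (rule ft_comp_cong_left[OF q pk])
  also have "ft_eq P \<dots> (ft_comp T f' (ft_comp T g q))"
    by (rule ft_eq_sym[OF ft_comp_assoc[OF c q g f']])
  also have "ft_eq P \<dots> (ft_comp T f' (ft_comp T f p))"
    by (rule ft_comp_cong_right[OF ft_eq_sym[OF square]])
  also have "ft_eq P \<dots> (ft_comp T (ft_comp T f' f) p)"
    by (rule ft_comp_assoc[OF c p fh f'])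
  also have "ft_eq P \<dots> (ft_comp T (ft_id T A) p)"
    by (rule ft_comp_cong_left[OF p f'f])
  also have "ft_eq P \<dots> p"
    by (rule ft_comp_id_left[OF c p])
  finally have p_kq: "ft_eq P (ft_comp T p (ft_comp T k q)) p" .
  have "ft_eq P (ft_comp T q (ft_comp T k q)) (ft_comp T (ft_comp T q k) q)"
    by (rule ft_comp_assoc[OF c q k q])
  also have "ft_eq P \<dots> (ft_comp T (ft_id T B) q)"
    by (rule ft_comp_cong_left[OF q qk])
  also have "ft_eq P \<dots> q"
    by (rule ft_comp_id_left[OF c q])
  finally have q_kq: "ft_eq P (ft_comp T q (ft_comp T k q)) q" .
  have "ft_eq P (ft_comp T k q) (ft_id T P)"
    using is_pullback_unique[OF pb P p q square ft_hom_comp[OF c q k] p_kq q_kq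
        ft_hom_id[OF c P] ft_comp_id_right[OF c p] ft_comp_id_right[OF c q]] .
  then show ?thesis
    unfolding ft_iso_def using q k qk by blast
qed

lemma is_res_NilD: "is_res T u U V [] R \<Longrightarrow> R = []"
  unfolding is_res_def is_pullback_def ft_hom_def by (cases R) auto

lemma is_res_NilI: "u \<in> cHom T U V \<Longrightarrow> is_res T u U V [] []"
  unfolding is_res_def is_pullback_def sl_obj_def ft_obj_def ft_hom_def ft_eq_def by auto

lemma is_res_iso_orbit:
  assumes c: "is_category T" and res: "is_res T u U V [(W, w)] R" and w: "cat_iso T W V w"
  shows "\<exists>X x. R = [(X, x)] \<and> cat_iso T X U x"
proof -
  obtain q where pb: "is_pullback T [W] [U] [V] (sl_str [(W, w)]) (\<lambda>_. 0, \<lambda>_. u) (map fst R) q (sl_str R)"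
    and u: "u \<in> cHom T U V"
    using res unfolding is_res_def by auto
  obtain w' where "w \<in> cHom T W V" "w' \<in> cHom T V W" "cComp T w w' = cId T V" "cComp T w' w = cId T W"
    using w unfolding cat_iso_def by blast
  then have "ft_iso T [W] [V] (sl_str [(W, w)])"
    unfolding ft_iso_def
    by (intro conjI exI[of _ "(\<lambda>_. 0, \<lambda>_. w')"])
      (auto simp: sl_str_def ft_hom_def ft_eq_def ft_comp_def ft_id_def)
  moreover have "ft_obj T [U]" "ft_hom T [U] [V] (\<lambda>_. 0, \<lambda>_. u)"
    using u cat_hom_dom[OF c u] unfolding ft_obj_def ft_hom_def by auto
  ultimately have "ft_iso T (map fst R) [U] (sl_str R)"
    using is_pullback_iso[OF c pb] by blast
  then obtain X where "map fst R = [X]" "cat_iso T X U (snd (R ! 0))"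
    using ft_iso_to_orbit unfolding sl_str_def by fastforce
  then show ?thesis
    by (cases R) auto
qed

lemma sl_iso_sym: "sl_iso T V S S' \<Longrightarrow> sl_iso T V S' S"
  unfolding sl_iso_def by blast

lemma sl_iso_Nil: "sl_iso T V S [] \<longleftrightarrow> S = []"
  unfolding sl_iso_def sl_obj_def sl_hom_def ft_hom_def ft_eq_def by (cases S) auto

lemma sl_iso_orbitD:
  assumes "sl_iso T V S [(U, u)]"
  shows "\<exists>X e. S = [(X, cComp T u e)] \<and> cat_iso T X U e"
proof -
  obtain h k where h: "sl_hom T S [(U, u)] h" and k: "sl_hom T [(U, u)] S k"
    and kh: "ft_eq (map fst S) (ft_comp T k h) (ft_id T (map fst S))"
    and hk: "ft_eq (map fst [(U, u)]) (ft_comp T h k) (ft_id T (map fst [(U, u)]))"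
    using assms unfolding sl_iso_def by blast
  have "ft_hom T (map fst S) [U] h" "ft_hom T [U] (map fst S) k" "ft_eq [U] (ft_comp T h k) (ft_id T [U])"
    using h k hk unfolding sl_hom_def by simp_all
  then have "ft_iso T (map fst S) [U] h"
    unfolding ft_iso_def using kh by blast
  then obtain X where X: "map fst S = [X]" and e: "cat_iso T X U (snd h 0)"
    using ft_iso_to_orbit by fastforce
  have "snd (S ! 0) = cComp T u (snd h 0)"
    using h X unfolding sl_hom_def ft_hom_def by auto
  with X e show ?thesis
    by (cases S) auto
qed

lemma sl_iso_terminal_iff:
  assumes c: "is_category T"
  shows "sl_iso T V S [(V, cId T V)] \<longleftrightarrow> (\<exists>U u. S = [(U, u)] \<and> cat_iso T U V u)"
proof
  assume "sl_iso T V S [(V, cId T V)]"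
  from sl_iso_orbitD[OF this] obtain U e where "S = [(U, cComp T (cId T V) e)]" "cat_iso T U V e"
    by blast
  then show "\<exists>U u. S = [(U, u)] \<and> cat_iso T U V u"
    using cat_id_left[OF c] unfolding cat_iso_def by auto
next
  assume "\<exists>U u. S = [(U, u)] \<and> cat_iso T U V u"
  then obtain U u u' where S: "S = [(U, u)]" and u: "u \<in> cHom T U V" "u' \<in> cHom T V U"
    "cComp T u u' = cId T V" "cComp T u' u = cId T U"
    unfolding cat_iso_def by blast
  have "sl_hom T S [(V, cId T V)] (\<lambda>_. 0, \<lambda>_. u)" "sl_hom T [(V, cId T V)] S (\<lambda>_. 0, \<lambda>_. u')"
    unfolding sl_hom_def ft_hom_def using S u cat_id_left[OF c u(1)] by simp_all
  moreover have "ft_eq (map fst S) (ft_comp T (\<lambda>_. 0, \<lambda>_. u') (\<lambda>_. 0, \<lambda>_. u)) (ft_id T (map fst S))"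
    "ft_eq (map fst [(V, cId T V)]) (ft_comp T (\<lambda>_. 0, \<lambda>_. u) (\<lambda>_. 0, \<lambda>_. u'))
       (ft_id T (map fst [(V, cId T V)]))"
    unfolding ft_eq_def ft_comp_def ft_id_def using S u by simp_all
  moreover have "sl_obj T V S" "sl_obj T V [(V, cId T V)]"
    unfolding sl_obj_def using S u cat_hom_dom[OF c u(1)] cat_id_hom[OF c] by auto
  ultimately show "sl_iso T V S [(V, cId T V)]"
    unfolding sl_iso_def by blast
qed

lemma wIndSys_iso_closed:
  "wIndSys T C \<Longrightarrow> V \<in> cOb T \<Longrightarrow> S \<in> C V \<Longrightarrow> sl_iso T V S S' \<Longrightarrow> S' \<in> C V"
  unfolding wIndSys_def full_sub_def by blast

lemma wIndSys_res_closed: "wIndSys T C \<Longrightarrow> is_res T u U V S R \<Longrightarrow> S \<in> C V \<Longrightarrow> R \<in> C U"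
  unfolding wIndSys_def full_sub_def by blast

lemma wIndSys_terminal: "wIndSys T C \<Longrightarrow> V \<in> cOb T \<Longrightarrow> C V \<noteq> {} \<Longrightarrow> [(V, cId T V)] \<in> C V"
  unfolding wIndSys_def by blast

lemma EF_iff:
  assumes "is_category T"
  shows "S \<in> EF T F V \<longleftrightarrow> V \<in> F \<and> (S = [] \<or> (\<exists>U u. S = [(U, u)] \<and> cat_iso T U V u))"
  unfolding EF_def by (simp add: sl_iso_Nil sl_iso_terminal_iff[OF assms])

lemma Nil_in_EF_iff: "[] \<in> EF T F V \<longleftrightarrow> V \<in> F"
  unfolding EF_def by (simp add: sl_iso_Nil)

lemma EF_iso_closed:
  assumes c: "is_category T" and S: "S \<in> EF T F V" and iso: "sl_iso T V S S'"
  shows "S' \<in> EF T F V"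
proof -
  have V: "V \<in> F" and "S = [] \<or> (\<exists>U u. S = [(U, u)] \<and> cat_iso T U V u)"
    using S unfolding EF_iff[OF c] by blast+
  then consider "S = []" | U u where "S = [(U, u)]" "cat_iso T U V u"
    by blast
  then show ?thesis
  proof cases
    case 1
    then have "S' = []" using sl_iso_sym[OF iso] by (simp add: sl_iso_Nil)
    then show ?thesis using V unfolding EF_iff[OF c] by blast
  next
    case 2
    then have "sl_iso T V S' [(U, u)]"
      using sl_iso_sym[OF iso] by simp
    from sl_iso_orbitD[OF this] obtain X e where S': "S' = [(X, cComp T u e)]" and e: "cat_iso T X U e"
      by blast
    have "cat_iso T X V (cComp T u e)"
      by (rule cat_iso_comp[OF c e 2(2)])
    with V S' show ?thesis
      unfolding EF_iff[OF c] by blast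
  qed
qed

lemma EF_res_closed:
  assumes c: "is_category T" and F: "family T F" and res: "is_res T u U V S R" and S: "S \<in> EF T F V"
  shows "R \<in> EF T F U"
proof -
  have V: "V \<in> F" and "S = [] \<or> (\<exists>W w. S = [(W, w)] \<and> cat_iso T W V w)"
    using S unfolding EF_iff[OF c] by blast+
  moreover have "U \<in> F"
    using F V res unfolding family_def is_res_def by blast
  ultimately show ?thesis
    using res is_res_NilD is_res_iso_orbit[OF c] EF_iff[OF c] by metis
qed

lemma EF_indcoprod_closed:
  assumes c: "is_category T" and S: "S \<in> EF T F V"
    and Ts: "\<forall>i<length S. Ts i \<in> EF T F (fst (S ! i))"
  shows "indcoprod T S Ts \<in> EF T F V"
proof -
  have V: "V \<in> F" and "S = [] \<or> (\<exists>W w. S = [(W, w)] \<and> cat_iso T W V w)"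
    using S unfolding EF_iff[OF c] by blast+
  then consider "S = []" | W w where "S = [(W, w)]" "cat_iso T W V w"
    by blast
  then show ?thesis
  proof cases
    case 1
    then show ?thesis using V EF_iff[OF c] by (simp add: indcoprod_def)
  next
    case 2
    then have "Ts 0 = [] \<or> (\<exists>X x. Ts 0 = [(X, x)] \<and> cat_iso T X W x)"
      using Ts EF_iff[OF c] by fastforce
    moreover have "indcoprod T S Ts = map (\<lambda>x. (fst x, cComp T w (snd x))) (Ts 0)"
      using 2 by (simp add: indcoprod_def)
    ultimately show ?thesis
      using V EF_iff[OF c] cat_iso_comp[OF c _ 2(2)] by auto
  qed
qed

lemma EF_wIndSys:
  assumes c: "is_category T" and F: "family T F"
  shows "wIndSys T (EF T F)"
proof -
  have "F \<subseteq> cOb T"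
    using F unfolding family_def by blast
  then have "EF T F V = {}" if "V \<notin> cOb T" for V
    using that unfolding EF_def by auto
  moreover have "sl_obj T V S" if "S \<in> EF T F V" for V S
    using that unfolding EF_def sl_iso_def by (auto split: if_splits)
  moreover have "[(V, cId T V)] \<in> EF T F V" if "V \<in> cOb T" "EF T F V \<noteq> {}" for V
    using that cat_iso_id[OF c] EF_iff[OF c] by (metis all_not_in_conv)
  ultimately show ?thesis
    unfolding wIndSys_def full_sub_def
    using EF_iso_closed[OF c] EF_res_closed[OF c F] EF_indcoprod_closed[OF c] by blast
qed

lemma upsilon_family:
  assumes c: "is_category T" and C: "wIndSys T C"
  shows "family T (upsilon T C)"
proof -
  have "V \<in> upsilon T C" if f: "f \<in> cHom T V W" and W: "W \<in> upsilon T C" for V W f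
  proof -
    have "[] \<in> C V"
      using wIndSys_res_closed[OF C is_res_NilI[OF f]] W unfolding upsilon_def by blast
    then show ?thesis using cat_hom_dom[OF c f] unfolding upsilon_def by blast
  qed
  then show ?thesis unfolding family_def upsilon_def by blast
qed

lemma upsilon_mono: "C \<le> C' \<Longrightarrow> upsilon T C \<subseteq> upsilon T C'"
  unfolding upsilon_def le_fun_def by blast

lemma EF_mono: "F \<subseteq> F' \<Longrightarrow> EF T F \<le> EF T F'"
  unfolding le_fun_def EF_def by auto

lemma upsilon_EF: "F \<subseteq> cOb T \<Longrightarrow> upsilon T (EF T F) = F"
  unfolding upsilon_def Nil_in_EF_iff by blast

lemma EF_le_iff:
  assumes F: "family T F" and C: "wIndSys T C"
  shows "EF T F \<le> C \<longleftrightarrow> F \<subseteq> upsilon T C"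
proof
  assume "EF T F \<le> C"
  then have "upsilon T (EF T F) \<subseteq> upsilon T C"
    by (rule upsilon_mono)
  moreover have "F \<subseteq> cOb T"
    using F unfolding family_def by blast
  ultimately show "F \<subseteq> upsilon T C"
    using upsilon_EF by metis
next
  assume F_sub: "F \<subseteq> upsilon T C"
  show "EF T F \<le> C" unfolding le_fun_def
  proof (intro allI subsetI)
    fix V S assume S: "S \<in> EF T F V"
    then have "V \<in> F" and S_iso: "sl_iso T V S [] \<or> sl_iso T V S [(V, cId T V)]"
      unfolding EF_def by (auto split: if_splits)
    then have V: "V \<in> cOb T" "[] \<in> C V"
      using F_sub unfolding upsilon_def by auto
    then have "[(V, cId T V)] \<in> C V"
      using wIndSys_terminal[OF C] by blast
    with V S_iso show "S \<in> C V"
      using wIndSys_iso_closed[OF C] sl_iso_sym by metis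
  qed
qed

theorem mainTheorem13:
  fixes T :: "('o,'m) cat"
  assumes "orbital T"
  shows "(\<forall>C. wIndSys T C \<longrightarrow> family T (upsilon T C))
    \<and> (\<forall>C C'. wIndSys T C \<and> wIndSys T C' \<and> C \<le> C' \<longrightarrow> upsilon T C \<subseteq> upsilon T C')
    \<and> (\<forall>F. family T F \<longrightarrow> wIndSys T (EF T F))
    \<and> (\<forall>F F'. family T F \<and> family T F' \<and> F \<subseteq> F' \<longrightarrow> EF T F \<le> EF T F')
    \<and> (\<forall>F C. family T F \<and> wIndSys T C \<longrightarrow> (EF T F \<le> C \<longleftrightarrow> F \<subseteq> upsilon T C))
    \<and> (\<forall>F F'. family T F \<and> family T F' \<and> EF T F \<le> EF T F' \<longrightarrow> F \<subseteq> F')"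
proof -
  have c: "is_category T"
    using assms unfolding orbital_def by blast
  have fully_faithful: "F \<subseteq> F'" if F: "family T F" and F': "family T F'" and le: "EF T F \<le> EF T F'"
    for F F'
  proof -
    have "F \<subseteq> upsilon T (EF T F')"
      using EF_le_iff[OF F EF_wIndSys[OF c F']] le by blast
    then show ?thesis
      using upsilon_EF F' unfolding family_def by blast
  qed
  show ?thesis
    using upsilon_family[OF c] upsilon_mono EF_wIndSys[OF c] EF_mono EF_le_iff fully_faithful
    by meson
qed

end
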